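(* Let $A$ be a commutative ring and $C$ a commutative noetherian $A$-algebra. If a $D(C,A)$-module $M$ has finite length in the category of $D(C,A)$-modules, then $M$ has only finitely many associated primes as a $C$-module; moreover, every simple $D(C,A)$-module has exactly one associated prime as a $C$-module.
   Context: $D(C,A)$ denotes the ring of $A$-linear differential operators on $C$: for $r\in C$, multiplication by $r$ is a differential operator of order $0$; an additive map $\delta:C\to C$ is a differential operator of order $\le n$ ($n\ge1$) if all commutators $r\circ\delta-\delta\circ r$ ($r\in C$) have order $\le n-1$; $D(C,A)$ consists of all such operators that are $A$-linear. *)

theory Defs
  imports Main
begin

definition is_ideal :: "'c::comm_ring_1 set \<Rightarrow> bool" where
  "is_ideal I \<longleftrightarrow> 0 \<in> I \<and> (\<forall>x\<in>I. \<forall>y\<in>I. x + y \<in> I) \<and> (\<forall>r. \<forall>x\<in>I. r * x \<in> I)"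

definition is_prime_ideal :: "'c::comm_ring_1 set \<Rightarrow> bool" where
  "is_prime_ideal P \<longleftrightarrow> is_ideal P \<and> P \<noteq> UNIV \<and> (\<forall>a b. a * b \<in> P \<longrightarrow> a \<in> P \<or> b \<in> P)"

definition noetherian_ring :: "'c::comm_ring_1 itself \<Rightarrow> bool" where
  "noetherian_ring _ \<longleftrightarrow> (\<forall>I::'c set. is_ideal I \<longrightarrow>
      (\<exists>S. finite S \<and> S \<subseteq> I \<and> I = {\<Sum>s\<in>S. f s * s | f. True}))"

definition ring_hom_map :: "('a::comm_ring_1 \<Rightarrow> 'c::comm_ring_1) \<Rightarrow> bool" where
  "ring_hom_map \<phi> \<longleftrightarrow> \<phi> 1 = 1 \<and> (\<forall>x y. \<phi> (x + y) = \<phi> x + \<phi> y) \<and> (\<forall>x y. \<phi> (x * y) = \<phi> x * \<phi> y)"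

fun diff_op :: "nat \<Rightarrow> ('c::comm_ring_1 \<Rightarrow> 'c) \<Rightarrow> bool" where
  "diff_op 0 \<delta> = (\<exists>r. \<delta> = (\<lambda>x. r * x))"
| "diff_op (Suc n) \<delta> = ((\<forall>x y. \<delta> (x + y) = \<delta> x + \<delta> y) \<and>
      (\<forall>r. diff_op n (\<lambda>x. r * \<delta> x - \<delta> (r * x))))"

definition Dops :: "('a::comm_ring_1 \<Rightarrow> 'c::comm_ring_1) \<Rightarrow> ('c \<Rightarrow> 'c) set" where
  "Dops \<phi> = {\<delta>. (\<exists>n. diff_op n \<delta>) \<and> (\<forall>x y. \<delta> (x + y) = \<delta> x + \<delta> y)
               \<and> (\<forall>a x. \<delta> (\<phi> a * x) = \<phi> a * \<delta> x)}"

definition D_module :: "('a::comm_ring_1 \<Rightarrow> 'c::comm_ring_1) \<Rightarrow> (('c \<Rightarrow> 'c) \<Rightarrow> 'm::ab_group_add \<Rightarrow> 'm) \<Rightarrow> bool" where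
  "D_module \<phi> act \<longleftrightarrow>
     (\<forall>\<delta>\<in>Dops \<phi>. \<forall>x y. act \<delta> (x + y) = act \<delta> x + act \<delta> y) \<and>
     (\<forall>\<delta>\<in>Dops \<phi>. \<forall>\<epsilon>\<in>Dops \<phi>. \<forall>x. act (\<lambda>c. \<delta> c + \<epsilon> c) x = act \<delta> x + act \<epsilon> x) \<and>
     (\<forall>\<delta>\<in>Dops \<phi>. \<forall>\<epsilon>\<in>Dops \<phi>. \<forall>x. act (\<delta> \<circ> \<epsilon>) x = act \<delta> (act \<epsilon> x)) \<and>
     (\<forall>x. act id x = x)"

definition D_submodule :: "('a::comm_ring_1 \<Rightarrow> 'c::comm_ring_1) \<Rightarrow> (('c \<Rightarrow> 'c) \<Rightarrow> 'm::ab_group_add \<Rightarrow> 'm) \<Rightarrow> 'm set \<Rightarrow> bool" where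
  "D_submodule \<phi> act N \<longleftrightarrow> 0 \<in> N \<and> (\<forall>x\<in>N. \<forall>y\<in>N. x + y \<in> N) \<and> (\<forall>x\<in>N. - x \<in> N) \<and>
      (\<forall>\<delta>\<in>Dops \<phi>. \<forall>x\<in>N. act \<delta> x \<in> N)"

text \<open>A composition series: a chain {0} = N_0 < N_1 < ... < N_k = M of D-submodules
  whose successive quotients N_(i+1)/N_i are simple, i.e. there is no D-submodule strictly in between.\<close>
definition composition_series :: "('a::comm_ring_1 \<Rightarrow> 'c::comm_ring_1) \<Rightarrow> (('c \<Rightarrow> 'c) \<Rightarrow> 'm::ab_group_add \<Rightarrow> 'm) \<Rightarrow> 'm set list \<Rightarrow> bool" where
  "composition_series \<phi> act Ns \<longleftrightarrow> Ns \<noteq> [] \<and> hd Ns = {0} \<and> last Ns = UNIV \<and>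
     (\<forall>N\<in>set Ns. D_submodule \<phi> act N) \<and>
     (\<forall>i. Suc i < length Ns \<longrightarrow> Ns ! i \<subset> Ns ! Suc i \<and>
        \<not> (\<exists>L. D_submodule \<phi> act L \<and> Ns ! i \<subset> L \<and> L \<subset> Ns ! Suc i))"

definition finite_length :: "('a::comm_ring_1 \<Rightarrow> 'c::comm_ring_1) \<Rightarrow> (('c \<Rightarrow> 'c) \<Rightarrow> 'm::ab_group_add \<Rightarrow> 'm) \<Rightarrow> bool" where
  "finite_length \<phi> act \<longleftrightarrow> (\<exists>Ns. composition_series \<phi> act Ns)"

definition simple_D_module :: "('a::comm_ring_1 \<Rightarrow> 'c::comm_ring_1) \<Rightarrow> (('c \<Rightarrow> 'c) \<Rightarrow> 'm::ab_group_add \<Rightarrow> 'm) \<Rightarrow> bool" where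
  "simple_D_module \<phi> act \<longleftrightarrow> (UNIV :: 'm set) \<noteq> {0} \<and>
     (\<forall>N. D_submodule \<phi> act N \<longrightarrow> N = {0} \<or> N = UNIV)"

section \<open>Associated primes of M viewed as a C-module (via multiplication operators)\<close>

definition C_ann :: "(('c::comm_ring_1 \<Rightarrow> 'c) \<Rightarrow> 'm::ab_group_add \<Rightarrow> 'm) \<Rightarrow> 'm \<Rightarrow> 'c set" where
  "C_ann act m = {r. act (\<lambda>x. r * x) m = 0}"

definition assoc_primes :: "(('c::comm_ring_1 \<Rightarrow> 'c) \<Rightarrow> 'm::ab_group_add \<Rightarrow> 'm) \<Rightarrow> 'c set set" where
  "assoc_primes act = {P. is_prime_ideal P \<and> (\<exists>m. P = C_ann act m)}"

end

theory Submission
  imports Defs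
begin

text \<open>
  For a simple subquotient \<open>N1 / N0\<close> and \<open>x \<in> N1 - N0\<close>, let \<open>Q = (N0 : x)\<close>. A differential
  operator of order \<open>n\<close> commutes with multiplication by \<open>r\<close> up to an operator of order \<open>n - 1\<close>,
  so it maps \<open>{y. Q\<^sup>k y \<subseteq> N0}\<close> into \<open>{y. Q\<^sup>k\<^sup>+\<^sup>n y \<subseteq> N0}\<close>. Hence the elements of \<open>N1\<close>
  killed by some power of \<open>Q\<close> modulo \<open>N0\<close> form a \<open>D\<close>-submodule strictly above \<open>N0\<close>, i.e. all
  of \<open>N1\<close>; thus \<open>Q\<close> lies in every prime of the form \<open>(N0 : x')\<close>, and such a subquotient has at
  most one associated prime. An associated prime \<open>Ann m\<close> of \<open>M\<close> reappears as the associated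
  prime of the first subquotient of a composition series containing a nonzero multiple of \<open>m\<close>.
  Existence in the simple case: over a noetherian ring a maximal annihilator is prime.
\<close>

lemma diff_op_comp_mult:
  "diff_op n \<delta> \<Longrightarrow> diff_op n (\<lambda>x. (\<delta>::'c::comm_ring_1 \<Rightarrow> 'c) (r * x))"
proof (induction n arbitrary: \<delta>)
  case 0
  then obtain s where "\<delta> = (*) s" by auto
  then show ?case by (auto intro!: exI[of _ "s * r"] simp: mult.assoc)
next
  case (Suc n)
  have "diff_op n (\<lambda>x. s * \<delta> (r * x) - \<delta> (r * (s * x)))" for s
    using Suc.IH[of "\<lambda>y. s * \<delta> y - \<delta> (s * y)"] Suc.prems by (simp add: mult.left_commute)
  then show ?case using Suc.prems by (simp add: distrib_left)
qed

lemma mult_in_Dops: "(*) r \<in> Dops \<phi>"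
  unfolding Dops_def mem_Collect_eq
  by (intro conjI exI[where x = 0]) (auto simp: distrib_left mult.left_commute)

lemma Dops_comp_mult: "\<delta> \<in> Dops \<phi> \<Longrightarrow> (\<lambda>x. \<delta> (r * x)) \<in> Dops \<phi>"
  unfolding Dops_def by (auto intro: diff_op_comp_mult simp: distrib_left) (metis mult.left_commute)

lemma Dops_commutator:
  assumes "\<delta> \<in> Dops \<phi>" and "diff_op (Suc n) \<delta>"
  shows "(\<lambda>x. r * \<delta> x - \<delta> (r * x)) \<in> Dops \<phi>" and "diff_op n (\<lambda>x. r * \<delta> x - \<delta> (r * x))"
  using assms unfolding Dops_def by (auto simp: distrib_left right_diff_distrib) (metis mult.left_commute)+

lemma prime_ideal_power_mem:
  assumes "is_prime_ideal P" and "r ^ k \<in> P"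
  shows "r \<in> P"
  using assms(2)
proof (induction k)
  case 0
  then have "s \<in> P" for s
    using assms(1) unfolding is_prime_ideal_def is_ideal_def by (metis mult.right_neutral power_0)
  then show ?case using assms(1) unfolding is_prime_ideal_def by auto
next
  case (Suc k)
  then show ?case using assms(1) unfolding is_prime_ideal_def by auto
qed

lemma ideal_linear_combination_mem:
  assumes "is_ideal I" and "finite S" and "S \<subseteq> I"
  shows "(\<Sum>s\<in>S. f s * s) \<in> I"
  using assms(2,3)
  by (induction S rule: finite_induct) (use assms(1) in \<open>auto simp: is_ideal_def\<close>)

lemma is_ideal_Union_chain:
  fixes I :: "nat \<Rightarrow> 'c::comm_ring_1 set"
  assumes ideal: "\<And>i. is_ideal (I i)" and "mono I"
  shows "is_ideal (\<Union> (range I))"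
  unfolding is_ideal_def
proof (intro conjI ballI allI)
  show "0 \<in> \<Union> (range I)" using ideal[of 0] unfolding is_ideal_def by blast
next
  fix x y assume "x \<in> \<Union> (range I)" "y \<in> \<Union> (range I)"
  then obtain i j where "x \<in> I i" "y \<in> I j" by blast
  then have "x \<in> I (max i j)" "y \<in> I (max i j)"
    using monoD[OF \<open>mono I\<close>, of i "max i j"] monoD[OF \<open>mono I\<close>, of j "max i j"] by auto
  then have "x + y \<in> I (max i j)" using ideal[of "max i j"] unfolding is_ideal_def by blast
  then show "x + y \<in> \<Union> (range I)" by blast
next
  fix r x assume "x \<in> \<Union> (range I)"
  then obtain i where "x \<in> I i" by blast
  then have "r * x \<in> I i" using ideal[of i] unfolding is_ideal_def by blast
  then show "r * x \<in> \<Union> (range I)" by blast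
qed

lemma noetherian_ascending_chain_stabilizes:
  fixes I :: "nat \<Rightarrow> 'c::comm_ring_1 set"
  assumes "noetherian_ring TYPE('c)" and "\<And>i. is_ideal (I i)" and "mono I"
  shows "\<exists>N. I (Suc N) = I N"
proof -
  let ?U = "\<Union> (range I)"
  from assms(1)[unfolded noetherian_ring_def, rule_format, OF is_ideal_Union_chain[OF assms(2,3)]]
  obtain S where S: "finite S" "S \<subseteq> ?U" "?U = {\<Sum>s\<in>S. f s * s | f. True}"
    by blast
  have "\<exists>N. S \<subseteq> I N"
    using S(1,2)
  proof (induction S rule: finite_induct)
    case (insert x S)
    then obtain N i where "S \<subseteq> I N" "x \<in> I i" by blast
    then show ?case
      using monoD[OF assms(3), of N "max i N"] monoD[OF assms(3), of i "max i N"] by auto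
  qed simp
  then obtain N where N: "S \<subseteq> I N" by blast
  have "?U \<subseteq> I N"
  proof
    fix u assume "u \<in> ?U"
    then obtain f where "u = (\<Sum>s\<in>S. f s * s)" using S(3) by blast
    then show "u \<in> I N" using ideal_linear_combination_mem[OF assms(2) S(1) N] by simp
  qed
  then have "I (Suc N) \<subseteq> I N" by blast
  then show ?thesis using monoD[OF assms(3), of N "Suc N"] by auto
qed

lemma noetherian_maximal_ideal_in:
  assumes "noetherian_ring TYPE('c::comm_ring_1)"
    and "F \<noteq> {}" and "\<And>I. I \<in> F \<Longrightarrow> is_ideal (I :: 'c set)"
  shows "\<exists>I\<in>F. \<forall>J\<in>F. I \<subseteq> J \<longrightarrow> J = I"
proof (rule ccontr)
  assume "\<not> ?thesis"
  then have "\<forall>I\<in>F. \<exists>J\<in>F. I \<subset> J" by blast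
  then obtain g where g: "\<forall>I\<in>F. g I \<in> F \<and> I \<subset> g I" by metis
  obtain I0 where "I0 \<in> F" using assms(2) by blast
  define I where "I i = (g ^^ i) I0" for i
  have IF: "I i \<in> F" for i
    by (induction i) (simp_all add: I_def \<open>I0 \<in> F\<close> g)
  have strict: "I i \<subset> I (Suc i)" for i
    using g IF[of i] by (simp add: I_def)
  then have "mono I" unfolding mono_iff_le_Suc by blast
  moreover have "is_ideal (I i)" for i using assms(3) IF by blast
  ultimately obtain N where "I (Suc N) = I N"
    using noetherian_ascending_chain_stabilizes[OF assms(1)] by blast
  then show False using strict[of N] by simp
qed

definition colon :: "(('c::comm_ring_1 \<Rightarrow> 'c) \<Rightarrow> 'm::ab_group_add \<Rightarrow> 'm) \<Rightarrow> 'm set \<Rightarrow> 'm \<Rightarrow> 'c set" where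
  "colon act N x = {r. act ((*) r) x \<in> N}"

definition layer_primes ::
    "(('c::comm_ring_1 \<Rightarrow> 'c) \<Rightarrow> 'm::ab_group_add \<Rightarrow> 'm) \<Rightarrow> 'm set \<Rightarrow> 'm set \<Rightarrow> 'c set set" where
  "layer_primes act N0 N1 = {P. is_prime_ideal P \<and> (\<exists>x \<in> N1 - N0. P = colon act N0 x)}"

text \<open>\<open>Q\<^sup>k y \<subseteq> N\<close>, spelled out with products of \<open>k\<close> elements of \<open>Q\<close>.\<close>
definition power_maps_into ::
    "(('c::comm_ring_1 \<Rightarrow> 'c) \<Rightarrow> 'm::ab_group_add \<Rightarrow> 'm) \<Rightarrow> 'c set \<Rightarrow> nat \<Rightarrow> 'm \<Rightarrow> 'm set \<Rightarrow> bool" where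
  "power_maps_into act Q k y N \<longleftrightarrow>
     (\<forall>rs. length rs = k \<longrightarrow> set rs \<subseteq> Q \<longrightarrow> act ((*) (prod_list rs)) y \<in> N)"

lemma C_ann_eq_colon_zero: "C_ann act m = colon act {0} m"
  unfolding C_ann_def colon_def by simp

context
  fixes \<phi> :: "'a::comm_ring_1 \<Rightarrow> 'c::comm_ring_1"
    and act :: "('c \<Rightarrow> 'c) \<Rightarrow> 'm::ab_group_add \<Rightarrow> 'm"
  assumes D_module: "D_module \<phi> act"
begin

lemma act_add: "\<delta> \<in> Dops \<phi> \<Longrightarrow> act \<delta> (x + y) = act \<delta> x + act \<delta> y"
  using D_module unfolding D_module_def by blast

lemma act_zero: "\<delta> \<in> Dops \<phi> \<Longrightarrow> act \<delta> 0 = 0"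
  using act_add[of \<delta> 0 0] by simp

lemma act_minus: "\<delta> \<in> Dops \<phi> \<Longrightarrow> act \<delta> (- x) = - act \<delta> x"
  using act_add[of \<delta> x "- x"] act_zero[of \<delta>] by (metis add.inverse_unique add.right_inverse)

lemma act_plus_op: "\<delta> \<in> Dops \<phi> \<Longrightarrow> \<epsilon> \<in> Dops \<phi> \<Longrightarrow> act (\<lambda>c. \<delta> c + \<epsilon> c) x = act \<delta> x + act \<epsilon> x"
  using D_module unfolding D_module_def by blast

lemma act_comp: "\<delta> \<in> Dops \<phi> \<Longrightarrow> \<epsilon> \<in> Dops \<phi> \<Longrightarrow> act (\<delta> \<circ> \<epsilon>) x = act \<delta> (act \<epsilon> x)"
  using D_module unfolding D_module_def by blast

lemma act_mult_one: "act ((*) 1) x = x"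
proof -
  have "(*) (1::'c) = id" by (simp add: fun_eq_iff)
  then show ?thesis using D_module unfolding D_module_def by simp
qed

lemma act_mult_mult: "act ((*) (a * b)) x = act ((*) a) (act ((*) b) x)"
proof -
  have "(*) (a * b) = (*) a \<circ> (*) b" by (simp add: fun_eq_iff mult.assoc)
  then show ?thesis using act_comp[OF mult_in_Dops mult_in_Dops] by simp
qed

lemma act_mult_commute: "act ((*) a) (act ((*) b) x) = act ((*) b) (act ((*) a) x)"
  by (metis act_mult_mult mult.commute)

lemma act_mult_add: "act ((*) (a + b)) x = act ((*) a) x + act ((*) b) x"
proof -
  have "(*) (a + b) = (\<lambda>c. a * c + b * c)" by (simp add: fun_eq_iff distrib_right)
  then show ?thesis using act_plus_op[OF mult_in_Dops mult_in_Dops] by simp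
qed

lemma act_mult_zero: "act ((*) 0) x = 0"
  using act_mult_add[of 0 0 x] by simp

lemma act_prod_list_Cons: "act ((*) (prod_list (r # rs))) x = act ((*) (prod_list rs)) (act ((*) r) x)"
  using act_mult_mult[of r "prod_list rs" x] act_mult_commute by simp

lemma act_mult_act_eq_commutator:
  assumes "\<delta> \<in> Dops \<phi>" and "diff_op (Suc n) \<delta>"
  shows "act ((*) r) (act \<delta> y) = act \<delta> (act ((*) r) y) + act (\<lambda>x. r * \<delta> x - \<delta> (r * x)) y"
proof -
  have "act ((*) r) (act \<delta> y) = act ((*) r \<circ> \<delta>) y"
    by (rule act_comp[OF mult_in_Dops assms(1), symmetric])
  also have "(*) r \<circ> \<delta> = (\<lambda>c. \<delta> (r * c) + (r * \<delta> c - \<delta> (r * c)))"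
    by (simp add: fun_eq_iff)
  also have "act \<dots> y = act (\<lambda>x. \<delta> (r * x)) y + act (\<lambda>x. r * \<delta> x - \<delta> (r * x)) y"
    by (rule act_plus_op[OF Dops_comp_mult[OF assms(1)] Dops_commutator(1)[OF assms]])
  also have "act (\<lambda>x. \<delta> (r * x)) y = act \<delta> (act ((*) r) y)"
    using act_comp[OF assms(1) mult_in_Dops] by (simp add: comp_def)
  finally show ?thesis .
qed

lemma D_submodule_act: "D_submodule \<phi> act N \<Longrightarrow> \<delta> \<in> Dops \<phi> \<Longrightarrow> x \<in> N \<Longrightarrow> act \<delta> x \<in> N"
  unfolding D_submodule_def by blast

lemma D_submodule_add: "D_submodule \<phi> act N \<Longrightarrow> x \<in> N \<Longrightarrow> y \<in> N \<Longrightarrow> x + y \<in> N"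
  unfolding D_submodule_def by blast

lemma D_submodule_zero: "D_submodule \<phi> act {0}"
  unfolding D_submodule_def using act_zero by auto

lemma power_maps_into_Cons:
  assumes "power_maps_into act Q (Suc k) y N" and "r \<in> Q"
  shows "power_maps_into act Q k (act ((*) r) y) N"
  unfolding power_maps_into_def
proof (intro allI impI)
  fix rs :: "'c list" assume "length rs = k" "set rs \<subseteq> Q"
  then show "act ((*) (prod_list rs)) (act ((*) r) y) \<in> N"
    using assms act_prod_list_Cons[of r rs y] unfolding power_maps_into_def
    by (metis insert_subset length_Cons list.simps(15))
qed

lemma power_maps_into_add:
  assumes "D_submodule \<phi> act N" and "power_maps_into act Q k y N"
  shows "power_maps_into act Q (k + j) y N"
  unfolding power_maps_into_def
proof (intro allI impI)
  fix rs :: "'c list" assume "length rs = k + j" and "set rs \<subseteq> Q"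
  then have "act ((*) (prod_list (take k rs))) y \<in> N"
    using assms(2) set_take_subset[of k rs] unfolding power_maps_into_def by auto
  then have "act ((*) (prod_list (drop k rs))) (act ((*) (prod_list (take k rs))) y) \<in> N"
    by (rule D_submodule_act[OF assms(1) mult_in_Dops])
  moreover have "prod_list rs = prod_list (drop k rs) * prod_list (take k rs)"
    by (metis append_take_drop_id mult.commute prod_list.append)
  ultimately show "act ((*) (prod_list rs)) y \<in> N" by (simp add: act_mult_mult)
qed

text \<open>Commute the factors one at a time past \<open>\<delta>\<close>; each commutator has lower order.\<close>
lemma power_maps_into_act:
  assumes N: "D_submodule \<phi> act N"
  shows "diff_op n \<delta> \<Longrightarrow> \<delta> \<in> Dops \<phi> \<Longrightarrow> power_maps_into act Q k y N \<Longrightarrow>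
    power_maps_into act Q (k + n) (act \<delta> y) N"
proof (induction n arbitrary: \<delta> k y)
  case 0
  then obtain r where "\<delta> = (*) r" by auto
  then show ?case
    using "0.prems"(3) D_submodule_act[OF N mult_in_Dops] act_mult_commute
    unfolding power_maps_into_def by simp
next
  case (Suc n)
  note lower_order = Suc.IH
  have \<delta>: "\<delta> \<in> Dops \<phi>" "diff_op (Suc n) \<delta>" using Suc.prems(1,2) by auto
  show ?case using Suc.prems(3)
  proof (induction k arbitrary: y)
    case 0
    then have "y \<in> N" unfolding power_maps_into_def using act_mult_one by force
    then have "power_maps_into act Q 0 (act \<delta> y) N"
      using D_submodule_act[OF N \<delta>(1)] act_mult_one unfolding power_maps_into_def by simp
    then show ?case using power_maps_into_add[OF N, of Q 0 _ "Suc n"] by simp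
  next
    case (Suc k)
    show ?case
      unfolding power_maps_into_def
    proof (intro allI impI)
      fix rs :: "'c list" assume len: "length rs = Suc k + Suc n" and "set rs \<subseteq> Q"
      then obtain r rs' where rs: "rs = r # rs'" and "r \<in> Q" "set rs' \<subseteq> Q"
        by (cases rs) auto
      let ?c = "\<lambda>x. r * \<delta> x - \<delta> (r * x)"
      have "power_maps_into act Q (k + Suc n) (act \<delta> (act ((*) r) y)) N"
        using Suc.IH power_maps_into_Cons[OF Suc.prems \<open>r \<in> Q\<close>] by blast
      moreover have "power_maps_into act Q (Suc k + n) (act ?c y) N"
        using lower_order[OF Dops_commutator(2,1)[OF \<delta>] Suc.prems] .
      ultimately have "act ((*) (prod_list rs')) (act \<delta> (act ((*) r) y)) +
          act ((*) (prod_list rs')) (act ?c y) \<in> N"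
        using len rs \<open>set rs' \<subseteq> Q\<close> D_submodule_add[OF N] unfolding power_maps_into_def by simp
      moreover have "act ((*) (prod_list rs)) (act \<delta> y) = act ((*) (prod_list rs')) (act ((*) r) (act \<delta> y))"
        using rs act_prod_list_Cons by blast
      ultimately show "act ((*) (prod_list rs)) (act \<delta> y) \<in> N"
        by (simp only: act_mult_act_eq_commutator[OF \<delta>] act_add[OF mult_in_Dops])
    qed
  qed
qed

lemma D_submodule_power_torsion:
  assumes N0: "D_submodule \<phi> act N0" and N1: "D_submodule \<phi> act N1"
  shows "D_submodule \<phi> act {y \<in> N1. \<exists>k. power_maps_into act Q k y N0}" (is "D_submodule \<phi> act ?L")
  unfolding D_submodule_def
proof (intro conjI ballI)
  show "0 \<in> ?L"
    using N0 N1 act_zero[OF mult_in_Dops] unfolding D_submodule_def power_maps_into_def by auto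
next
  fix a b assume "a \<in> ?L" "b \<in> ?L"
  then obtain ka kb where ab: "a \<in> N1" "b \<in> N1"
    and "power_maps_into act Q ka a N0" "power_maps_into act Q kb b N0" by blast
  then have "power_maps_into act Q (ka + kb) a N0" "power_maps_into act Q (kb + ka) b N0"
    using power_maps_into_add[OF N0] by blast+
  then have "power_maps_into act Q (ka + kb) (a + b) N0"
    using D_submodule_add[OF N0] act_add[OF mult_in_Dops] unfolding power_maps_into_def
    by (simp add: add.commute)
  then show "a + b \<in> ?L"
    using ab D_submodule_add[OF N1] by blast
next
  fix a assume "a \<in> ?L"
  then obtain k where "a \<in> N1" and "power_maps_into act Q k a N0" by blast
  then have "power_maps_into act Q k (- a) N0" and "- a \<in> N1"
    using N0 N1 act_minus[OF mult_in_Dops] unfolding D_submodule_def power_maps_into_def by simp_all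
  then show "- a \<in> ?L" by blast
next
  fix \<delta> a assume \<delta>: "\<delta> \<in> Dops \<phi>" and "a \<in> ?L"
  then obtain k n where "a \<in> N1" "power_maps_into act Q k a N0" "diff_op n \<delta>"
    unfolding Dops_def by blast
  then show "act \<delta> a \<in> ?L"
    using power_maps_into_act[OF N0 _ \<delta>] D_submodule_act[OF N1 \<delta>] by blast
qed

lemma colon_subset_prime_colon:
  assumes N0: "D_submodule \<phi> act N0" and N1: "D_submodule \<phi> act N1" and "N0 \<subseteq> N1"
    and simple: "\<not> (\<exists>L. D_submodule \<phi> act L \<and> N0 \<subset> L \<and> L \<subset> N1)"
    and x: "x \<in> N1 - N0" and "x' \<in> N1" and prime: "is_prime_ideal (colon act N0 x')"
  shows "colon act N0 x \<subseteq> colon act N0 x'"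
proof
  let ?Q = "colon act N0 x"
  let ?L = "{y \<in> N1. \<exists>k. power_maps_into act ?Q k y N0}"
  have "power_maps_into act ?Q 1 x N0"
    unfolding power_maps_into_def colon_def by (auto simp: length_Suc_conv)
  then have "x \<in> ?L" using x by blast
  moreover have "N0 \<subseteq> ?L"
    using \<open>N0 \<subseteq> N1\<close> act_mult_one unfolding power_maps_into_def by (auto intro!: exI[of _ 0])
  ultimately have "?L = N1"
    using simple D_submodule_power_torsion[OF N0 N1] x by blast
  then obtain k where k: "power_maps_into act ?Q k x' N0" using \<open>x' \<in> N1\<close> by blast
  fix r assume "r \<in> ?Q"
  then have "set (replicate k r) \<subseteq> ?Q" by auto
  then have "r ^ k \<in> colon act N0 x'"
    using k[unfolded power_maps_into_def, rule_format, of "replicate k r"]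
    by (simp add: colon_def prod_list_replicate)
  then show "r \<in> colon act N0 x'" using prime_ideal_power_mem[OF prime] by blast
qed

lemma D_submodule_UNIV: "D_submodule \<phi> act UNIV"
  unfolding D_submodule_def by blast

lemma layer_primes_subsingleton:
  assumes "D_submodule \<phi> act N0" and "D_submodule \<phi> act N1" and "N0 \<subseteq> N1"
    and "\<not> (\<exists>L. D_submodule \<phi> act L \<and> N0 \<subset> L \<and> L \<subset> N1)"
  shows "\<exists>P. layer_primes act N0 N1 \<subseteq> {P}"
proof -
  have "P = P'" if P: "P \<in> layer_primes act N0 N1" and P': "P' \<in> layer_primes act N0 N1" for P P'
  proof -
    obtain x x' where "x \<in> N1 - N0" "is_prime_ideal P" "P = colon act N0 x"
      and "x' \<in> N1 - N0" "is_prime_ideal P'" "P' = colon act N0 x'"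
      using P P' unfolding layer_primes_def by blast
    then show "P = P'" using colon_subset_prime_colon[OF assms] by (metis Diff_iff subset_antisym)
  qed
  then show ?thesis by blast
qed

lemma is_ideal_C_ann: "is_ideal (C_ann act m)"
  unfolding is_ideal_def C_ann_def
  by (auto simp: act_mult_zero act_mult_add act_mult_mult act_zero[OF mult_in_Dops])

lemma assoc_primes_eq_layer_primes: "assoc_primes act = layer_primes act {0} UNIV"
proof -
  have "m \<noteq> 0" if "is_prime_ideal (C_ann act m)" for m
    using that act_zero[OF mult_in_Dops] unfolding is_prime_ideal_def C_ann_def by auto
  then show ?thesis
    unfolding assoc_primes_def layer_primes_def C_ann_eq_colon_zero by auto
qed

lemma C_ann_prime_if_maximal:
  assumes "m \<noteq> 0" and maximal: "\<And>m'. m' \<noteq> 0 \<Longrightarrow> C_ann act m \<subseteq> C_ann act m' \<Longrightarrow> C_ann act m' = C_ann act m"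
  shows "is_prime_ideal (C_ann act m)"
proof -
  have "1 \<notin> C_ann act m" using \<open>m \<noteq> 0\<close> by (simp add: C_ann_def act_mult_one)
  moreover have "a \<in> C_ann act m \<or> b \<in> C_ann act m" if ab: "a * b \<in> C_ann act m" for a b
  proof (cases "a \<in> C_ann act m")
    case False
    then have "act ((*) a) m \<noteq> 0" unfolding C_ann_def by simp
    moreover have "C_ann act m \<subseteq> C_ann act (act ((*) a) m)"
    proof
      fix s assume "s \<in> C_ann act m"
      then show "s \<in> C_ann act (act ((*) a) m)"
        unfolding C_ann_def by (simp add: act_mult_commute[of s a] act_zero[OF mult_in_Dops])
    qed
    ultimately have "C_ann act (act ((*) a) m) = C_ann act m" by (rule maximal)
    moreover have "b \<in> C_ann act (act ((*) a) m)"
      using ab unfolding C_ann_def by (simp add: act_mult_mult act_mult_commute[of a b])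
    ultimately show ?thesis by simp
  qed simp
  ultimately show ?thesis unfolding is_prime_ideal_def using is_ideal_C_ann by blast
qed

lemma assoc_primes_nonempty:
  assumes "noetherian_ring TYPE('c)" and "(m::'m) \<noteq> 0"
  shows "assoc_primes act \<noteq> {}"
proof -
  obtain I where "I \<in> {C_ann act m | m. m \<noteq> 0}"
    and maximal: "\<forall>J\<in>{C_ann act m | m. m \<noteq> 0}. I \<subseteq> J \<longrightarrow> J = I"
    using noetherian_maximal_ideal_in[OF assms(1), of "{C_ann act m | m. m \<noteq> 0}"] assms(2) is_ideal_C_ann
    by blast
  then obtain m0 where "m0 \<noteq> 0" "I = C_ann act m0" by blast
  then have "is_prime_ideal (C_ann act m0)"
    using maximal by (intro C_ann_prime_if_maximal) auto
  then show ?thesis unfolding assoc_primes_def by blast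
qed

lemma colon_act_mult_eq_C_ann:
  assumes prime: "is_prime_ideal (C_ann act m)" and "r \<notin> C_ann act m"
    and N: "D_submodule \<phi> act N" and disjoint: "\<And>s. act ((*) s) m \<in> N \<Longrightarrow> act ((*) s) m = 0"
  shows "colon act N (act ((*) r) m) = C_ann act m"
proof (intro set_eqI iffI)
  fix s assume "s \<in> colon act N (act ((*) r) m)"
  then have "act ((*) (s * r)) m \<in> N" by (simp add: colon_def act_mult_mult)
  then have "s * r \<in> C_ann act m" using disjoint by (simp add: C_ann_def)
  then show "s \<in> C_ann act m"
    using prime \<open>r \<notin> C_ann act m\<close> unfolding is_prime_ideal_def by blast
next
  fix s assume "s \<in> C_ann act m"
  then have "act ((*) s) (act ((*) r) m) = 0"
    unfolding C_ann_def by (simp add: act_mult_commute[of s r] act_zero[OF mult_in_Dops])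
  then show "s \<in> colon act N (act ((*) r) m)"
    using N unfolding colon_def D_submodule_def by simp
qed

text \<open>For \<open>P = C_ann act m\<close>, take the first member of the chain that contains a nonzero multiple of \<open>m\<close>.\<close>
lemma assoc_primes_subset_layer_primes:
  assumes "Ns \<noteq> []" and "hd Ns = {0}" and "last Ns = UNIV"
    and submodules: "\<And>N. N \<in> set Ns \<Longrightarrow> D_submodule \<phi> act N"
  shows "assoc_primes act \<subseteq> (\<Union>i \<in> {i. Suc i < length Ns}. layer_primes act (Ns ! i) (Ns ! Suc i))"
proof
  fix P assume "P \<in> assoc_primes act"
  then obtain m where prime: "is_prime_ideal P" and P: "P = C_ann act m"
    unfolding assoc_primes_def by blast
  define meets where "meets j \<longleftrightarrow> (\<exists>r. act ((*) r) m \<noteq> 0 \<and> act ((*) r) m \<in> Ns ! j)" for j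
  have "m \<noteq> 0"
    using prime P act_zero[OF mult_in_Dops] unfolding is_prime_ideal_def C_ann_def by auto
  then have "meets (length Ns - 1)"
    using assms(1,3) act_mult_one unfolding meets_def by (metis UNIV_I last_conv_nth)
  then obtain j where j: "meets j" "\<And>j'. j' < j \<Longrightarrow> \<not> meets j'"
    using exists_least_iff[of meets] by blast
  have "j \<le> length Ns - 1" using j(2) \<open>meets (length Ns - 1)\<close> by (meson not_le)
  then have "j < length Ns" using assms(1) by (simp add: less_eq_iff_succ_less)
  moreover have "\<not> meets 0" using assms(1,2) unfolding meets_def by (simp add: hd_conv_nth[symmetric])
  then have "j \<noteq> 0" using j(1) by metis
  ultimately obtain i where i: "j = Suc i" "Suc i < length Ns" by (cases j) auto
  then obtain r where r: "act ((*) r) m \<noteq> 0" "act ((*) r) m \<in> Ns ! Suc i"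
    using j(1) unfolding meets_def by blast
  have disjoint: "act ((*) s) m \<in> Ns ! i \<Longrightarrow> act ((*) s) m = 0" for s
    using j(2)[of i] i(1) unfolding meets_def by blast
  have "r \<notin> C_ann act m" using r(1) unfolding C_ann_def by simp
  moreover have "Ns ! i \<in> set Ns" using i(2) by simp
  ultimately have "P = colon act (Ns ! i) (act ((*) r) m)"
    using colon_act_mult_eq_C_ann[OF _ _ submodules disjoint] prime P by simp
  moreover have "act ((*) r) m \<in> Ns ! Suc i - Ns ! i" using r disjoint by blast
  ultimately have "P \<in> layer_primes act (Ns ! i) (Ns ! Suc i)"
    using prime unfolding layer_primes_def by blast
  then show "P \<in> (\<Union>i \<in> {i. Suc i < length Ns}. layer_primes act (Ns ! i) (Ns ! Suc i))"
    using i(2) by blast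
qed

lemma finite_assoc_primes_if_composition_series:
  assumes "composition_series \<phi> act Ns"
  shows "finite (assoc_primes act)"
proof -
  have chain: "Ns \<noteq> []" "hd Ns = {0}" "last Ns = UNIV" "\<And>N. N \<in> set Ns \<Longrightarrow> D_submodule \<phi> act N"
    and simple_steps: "\<And>i. Suc i < length Ns \<Longrightarrow> Ns ! i \<subset> Ns ! Suc i \<and>
        \<not> (\<exists>L. D_submodule \<phi> act L \<and> Ns ! i \<subset> L \<and> L \<subset> Ns ! Suc i)"
    using assms unfolding composition_series_def by blast+
  have "finite (layer_primes act (Ns ! i) (Ns ! Suc i))" if i: "Suc i < length Ns" for i
  proof -
    have "Ns ! i \<in> set Ns" "Ns ! Suc i \<in> set Ns" using i by auto
    moreover have "Ns ! i \<subseteq> Ns ! Suc i" using simple_steps[OF i] by blast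
    moreover have "\<not> (\<exists>L. D_submodule \<phi> act L \<and> Ns ! i \<subset> L \<and> L \<subset> Ns ! Suc i)"
      using simple_steps[OF i] by blast
    ultimately obtain P where "layer_primes act (Ns ! i) (Ns ! Suc i) \<subseteq> {P}"
      using layer_primes_subsingleton chain(4) by meson
    then show ?thesis by (rule finite_subset) simp
  qed
  then have "finite (\<Union>i \<in> {i. Suc i < length Ns}. layer_primes act (Ns ! i) (Ns ! Suc i))"
    by (intro finite_UN_I) (auto intro: finite_subset[of _ "{..<length Ns}"])
  then show ?thesis using assoc_primes_subset_layer_primes[OF chain] finite_subset by blast
qed

lemma ex1_assoc_prime_if_simple:
  assumes "noetherian_ring TYPE('c)" and simple: "simple_D_module \<phi> act"
  shows "\<exists>!P. P \<in> assoc_primes act"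
proof -
  obtain m :: 'm where "m \<noteq> 0" using simple unfolding simple_D_module_def by blast
  then have "assoc_primes act \<noteq> {}" by (rule assoc_primes_nonempty[OF assms(1)])
  moreover obtain P where "assoc_primes act \<subseteq> {P}"
    using layer_primes_subsingleton[OF D_submodule_zero D_submodule_UNIV] simple
    unfolding assoc_primes_eq_layer_primes simple_D_module_def by blast
  ultimately show ?thesis by blast
qed

end

theorem mainTheorem2:
  fixes \<phi> :: "'a::comm_ring_1 \<Rightarrow> 'c::comm_ring_1"
    and act :: "('c \<Rightarrow> 'c) \<Rightarrow> 'm::ab_group_add \<Rightarrow> 'm"
  assumes "ring_hom_map \<phi>"
    and "noetherian_ring TYPE('c)"
    and "D_module \<phi> act"
  shows "(finite_length \<phi> act \<longrightarrow> finite (assoc_primes act))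
       \<and> (simple_D_module \<phi> act \<longrightarrow> (\<exists>!P. P \<in> assoc_primes act))"
proof (intro conjI impI)
  assume "finite_length \<phi> act"
  then obtain Ns where "composition_series \<phi> act Ns" unfolding finite_length_def by blast
  then show "finite (assoc_primes act)"
    by (rule finite_assoc_primes_if_composition_series[OF assms(3)])
next
  assume "simple_D_module \<phi> act"
  then show "\<exists>!P. P \<in> assoc_primes act" by (rule ex1_assoc_prime_if_simple[OF assms(3,2)])
qed

end
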